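(* Let $n,M$ be positive integers and $\epsilon\in[0,1]$. Every $(n,M,\epsilon)$-FLF code for the CM-DMBC, with encoding functions $f_1,\dots,f_n$, satisfies, for every $\lambda>0$, $$\epsilon\ \ge\ \frac12\,\mathbb P\Big[\sum_{k=1}^2\eta_k\sum_{i=1}^n \imath_{P^*,W_k}\big(f_i(J,Y_1^{i-1},Y_2^{i-1});Y_{k,i}\big)\le \log M-\lambda\Big]-e^{-\lambda},$$ where the probability is computed under the distribution $$\mathbb P_{J,Y_1^n,Y_2^n}(j,y_1^n,y_2^n)=\frac1M\prod_{i=1}^n\prod_{k=1}^2 W_k\big(y_{k,i}\,\big|\,f_i(j,y_1^{i-1},y_2^{i-1})\big).$$
   Context: Setting: finite alphabets $\mathcal X=\{1,\dots,N\}$, $\mathcal Y$; transition matrices $W_1,W_2$ from $\mathcal X$ to $\mathcal Y$. The common-message discrete memoryless broadcast channel (CM-DMBC) has, at each time, outputs $(y_1,y_2)$ with probability $W_1(y_1|x)W_2(y_2|x)$ given input $x$, independently over time. For a distribution $P$ on $\mathcal X$: $PW_k(y)=\sum_xP(x)W_k(y|x)$, $\imath_{P,W_k}(x;y)=\log\frac{W_k(y|x)}{PW_k(y)}$ (natural log), $I_k(P)=\sum_xP(x)D(W_k(\cdot|x)\|PW_k)$, $V_k(P)=\sum_xP(x)\mathrm{Var}[\imath_{P,W_k}(x;Y_k)]$ with $Y_k\sim W_k(\cdot|x)$. $C=\max_P\min_kI_k(P)$, $C_k=\max_PI_k(P)$. Standing assumptions: the maximizer $P^*$ of $\min_kI_k$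 is unique, $P^*(x)>0$ for all $x$, $V_k(P^* )>0$ and $C_k>C$ for $k=1,2$. Let $P^*_{Y_k}=P^*W_k$ and for $\mathbf v\in\mathbb R^N$ with entries summing to zero, $\mathrm dI_k(\mathbf v)=\sum_xv_xD(W_k(\cdot|x)\|P^*_{Y_k})$. $\eta\in(0,1)$ is the unique constant with $\eta\,\mathrm dI_1(\mathbf v)+(1-\eta)\mathrm dI_2(\mathbf v)=0$ for all such $\mathbf v$; $\eta_1=\eta$, $\eta_2=1-\eta$. An $(n,M,\epsilon)$-FLF (fixed-length feedback) code consists of encoding functions $f_i:\{1,\dots,M\}\times\mathcal Y^{i-1}\times\mathcal Y^{i-1}\to\mathcal X$, $i=1,\dots,n$, producing $X_i=f_i(J,Y_1^{i-1},Y_2^{i-1})$ where the message $J$ is uniform on $\{1,\dots,M\}$, and decoders $g_k:\mathcal Y^n\to\{1,\dots,M\}$ with $\mathbb P[g_k(Y_k^n)\ne J]\le\epsilon$ for $k=1,2$. *)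

theory Defs
  imports "HOL-Analysis.Analysis"
begin

text \<open>Finite alphabets are finite types 'x (input) and 'y (output).
  A transition matrix is W :: 'x => 'y => real, W x y = W(y|x).\<close>

definition stochastic :: "('x::finite \<Rightarrow> 'y::finite \<Rightarrow> real) \<Rightarrow> bool" where
  "stochastic W \<longleftrightarrow> (\<forall>x y. 0 \<le> W x y) \<and> (\<forall>x. (\<Sum>y\<in>UNIV. W x y) = 1)"

definition is_dist :: "('a::finite \<Rightarrow> real) \<Rightarrow> bool" where
  "is_dist P \<longleftrightarrow> (\<forall>a. 0 \<le> P a) \<and> (\<Sum>a\<in>UNIV. P a) = 1"

definition out_dist :: "('x::finite \<Rightarrow> real) \<Rightarrow> ('x \<Rightarrow> 'y \<Rightarrow> real) \<Rightarrow> 'y \<Rightarrow> real" where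
  "out_dist P W y = (\<Sum>x\<in>UNIV. P x * W x y)"

definition info_dens :: "('x::finite \<Rightarrow> real) \<Rightarrow> ('x \<Rightarrow> 'y \<Rightarrow> real) \<Rightarrow> 'x \<Rightarrow> 'y \<Rightarrow> real" where
  "info_dens P W x y = ln (W x y / out_dist P W y)"

definition KL :: "('y::finite \<Rightarrow> real) \<Rightarrow> ('y \<Rightarrow> real) \<Rightarrow> real" where
  "KL p q = (\<Sum>y\<in>UNIV. if p y = 0 then 0 else p y * ln (p y / q y))"

definition mutual_info :: "('x::finite \<Rightarrow> real) \<Rightarrow> ('x \<Rightarrow> 'y::finite \<Rightarrow> real) \<Rightarrow> real" where
  "mutual_info P W = (\<Sum>x\<in>UNIV. P x * KL (W x) (out_dist P W))"

definition disp :: "('x::finite \<Rightarrow> real) \<Rightarrow> ('x \<Rightarrow> 'y::finite \<Rightarrow> real) \<Rightarrow> real" where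
  "disp P W = (\<Sum>x\<in>UNIV. P x *
     (\<Sum>y\<in>UNIV. if W x y = 0 then 0
        else W x y * (info_dens P W x y - KL (W x) (out_dist P W))\<^sup>2))"

definition capacity :: "('x::finite \<Rightarrow> 'y::finite \<Rightarrow> real) \<Rightarrow> real" where
  "capacity W = (SUP P\<in>{P. is_dist P}. mutual_info P W)"

definition unique_maxmin :: "('x::finite \<Rightarrow> 'y::finite \<Rightarrow> real) \<Rightarrow> ('x \<Rightarrow> 'y \<Rightarrow> real) \<Rightarrow> ('x \<Rightarrow> real) \<Rightarrow> bool" where
  "unique_maxmin W1 W2 Ps \<longleftrightarrow> is_dist Ps \<and>
     (\<forall>P. is_dist P \<longrightarrow> min (mutual_info P W1) (mutual_info P W2) \<le> min (mutual_info Ps W1) (mutual_info Ps W2)) \<and>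
     (\<forall>P. is_dist P \<and> min (mutual_info P W1) (mutual_info P W2) = min (mutual_info Ps W1) (mutual_info Ps W2) \<longrightarrow> P = Ps)"

definition dI :: "('x::finite \<Rightarrow> real) \<Rightarrow> ('x \<Rightarrow> 'y::finite \<Rightarrow> real) \<Rightarrow> ('x \<Rightarrow> real) \<Rightarrow> real" where
  "dI Ps W v = (\<Sum>x\<in>UNIV. v x * KL (W x) (out_dist Ps W))"

text \<open>Messages are 1..M. Time indices are 0..n-1 (time i+1 in the paper);
  the encoder at index i gets the past outputs as lists of length i.
  f :: time => message => past Y1 => past Y2 => input.\<close>
definition joint :: "nat \<Rightarrow> nat \<Rightarrow> ('x \<Rightarrow> 'y \<Rightarrow> real) \<Rightarrow> ('x \<Rightarrow> 'y \<Rightarrow> real)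
    \<Rightarrow> (nat \<Rightarrow> nat \<Rightarrow> 'y list \<Rightarrow> 'y list \<Rightarrow> 'x) \<Rightarrow> nat \<Rightarrow> 'y list \<Rightarrow> 'y list \<Rightarrow> real" where
  "joint n M W1 W2 f j y1 y2 = (1 / real M) *
     (\<Prod>i<n. W1 (f i j (take i y1) (take i y2)) (y1 ! i) * W2 (f i j (take i y1) (take i y2)) (y2 ! i))"

definition code_prob :: "nat \<Rightarrow> nat \<Rightarrow> ('x \<Rightarrow> 'y::finite \<Rightarrow> real) \<Rightarrow> ('x \<Rightarrow> 'y \<Rightarrow> real)
    \<Rightarrow> (nat \<Rightarrow> nat \<Rightarrow> 'y list \<Rightarrow> 'y list \<Rightarrow> 'x) \<Rightarrow> (nat \<Rightarrow> 'y list \<Rightarrow> 'y list \<Rightarrow> bool) \<Rightarrow> real" where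
  "code_prob n M W1 W2 f E = (\<Sum>j\<in>{1..M}. \<Sum>y1\<in>{ys. length ys = n}. \<Sum>y2\<in>{ys. length ys = n}.
      if E j y1 y2 then joint n M W1 W2 f j y1 y2 else 0)"

definition FLF_code :: "nat \<Rightarrow> nat \<Rightarrow> real \<Rightarrow> ('x \<Rightarrow> 'y::finite \<Rightarrow> real) \<Rightarrow> ('x \<Rightarrow> 'y \<Rightarrow> real)
    \<Rightarrow> (nat \<Rightarrow> nat \<Rightarrow> 'y list \<Rightarrow> 'y list \<Rightarrow> 'x) \<Rightarrow> ('y list \<Rightarrow> nat) \<Rightarrow> ('y list \<Rightarrow> nat) \<Rightarrow> bool" where
  "FLF_code n M eps W1 W2 f g1 g2 \<longleftrightarrow>
     (\<forall>ys. length ys = n \<longrightarrow> g1 ys \<in> {1..M} \<and> g2 ys \<in> {1..M}) \<and>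
     code_prob n M W1 W2 f (\<lambda>j y1 y2. g1 y1 \<noteq> j) \<le> eps \<and>
     code_prob n M W1 W2 f (\<lambda>j y1 y2. g2 y2 \<noteq> j) \<le> eps"

end

theory Submission
  imports Defs
begin

text \<open>If the weighted sum of the two information densities is at most \<open>ln M - \<lambda>\<close>, then one of
  them is, so the event is covered by a decoding error of some receiver or by the event that
  receiver \<open>k\<close> decodes correctly although its information density is at most \<open>ln M - \<lambda>\<close>.
  A change of measure from \<open>W\<^sub>k\<close> to the product output distribution \<open>P*W\<^sub>k\<close> shows that the latter
  event has probability at most \<open>e\<^sup>-\<^sup>\<lambda>\<close>, because at most one message is decoded per output.\<close>

lemma lists_length_Suc_eq:
  "{ys::'a list. length ys = Suc n} = (\<lambda>(a,r). a#r) ` (UNIV \<times> {ys. length ys = n})"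
  by (auto simp: image_iff length_Suc_conv)

lemma sum_causal_prod_eq_1:
  fixes p :: "nat \<Rightarrow> 'y list \<Rightarrow> 'y::finite \<Rightarrow> real"
  assumes "\<And>i r. (\<Sum>a\<in>UNIV. p i r a) = 1"
  shows "(\<Sum>ys\<in>{ys. length ys = n}. \<Prod>i<n. p i (take i ys) (ys ! i)) = 1"
  using assms
proof (induction n arbitrary: p)
  case 0
  have "{ys::'y list. length ys = 0} = {[]}" by auto
  then show ?case by simp
next
  case (Suc n)
  have inj: "inj_on (\<lambda>(a,r). a#r) (UNIV \<times> {ys::'y list. length ys = n})"
    by (auto simp: inj_on_def)
  have IH: "(\<Sum>r\<in>{ys. length ys = n}. \<Prod>i<n. p (Suc i) (a # take i r) (r ! i)) = 1" for a
    using Suc.IH[of "\<lambda>i r. p (Suc i) (a # r)"] Suc.prems by simp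
  have "(\<Sum>ys\<in>{ys. length ys = Suc n}. \<Prod>i<Suc n. p i (take i ys) (ys ! i))
      = (\<Sum>(a,r)\<in>UNIV \<times> {ys. length ys = n}. \<Prod>i<Suc n. p i (take i (a#r)) ((a#r) ! i))"
    unfolding lists_length_Suc_eq by (subst sum.reindex[OF inj]) (simp add: case_prod_beta)
  also have "\<dots> = (\<Sum>a\<in>UNIV. \<Sum>r\<in>{ys. length ys = n}.
                    p 0 [] a * (\<Prod>i<n. p (Suc i) (a # take i r) (r ! i)))"
    unfolding prod.lessThan_Suc_shift by (subst sum.cartesian_product[symmetric]) simp
  also have "\<dots> = (\<Sum>a\<in>UNIV. p 0 [] a)"
    by (simp add: sum_distrib_left[symmetric] IH)
  finally show ?case using Suc.prems by simp
qed

lemma out_dist_nonneg: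
  assumes "stochastic W" "is_dist P"
  shows "out_dist P W y \<ge> 0"
  using assms unfolding out_dist_def stochastic_def is_dist_def by (auto intro!: sum_nonneg)

lemma sum_out_dist:
  assumes "stochastic W" "is_dist P"
  shows "(\<Sum>y\<in>UNIV. out_dist P W y) = 1"
proof -
  have "(\<Sum>y\<in>UNIV. out_dist P W y) = (\<Sum>x\<in>UNIV. P x * (\<Sum>y\<in>UNIV. W x y))"
    unfolding out_dist_def by (subst sum.swap) (simp add: sum_distrib_left)
  also have "\<dots> = 1" using assms by (simp add: stochastic_def is_dist_def)
  finally show ?thesis .
qed

lemma out_dist_pos:
  assumes "stochastic W" "\<forall>x. P x > 0" "W x y > 0"
  shows "out_dist P W y > 0"
proof -
  have "0 < P x * W x y" using assms by simp
  also have "\<dots> \<le> out_dist P W y"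
    unfolding out_dist_def
    by (rule member_le_sum[where f = "\<lambda>x. P x * W x y"])
       (use assms in \<open>auto simp: stochastic_def less_imp_le\<close>)
  finally show ?thesis .
qed

lemma prod_channel_le_exp_info_dens:
  fixes W :: "'x::finite \<Rightarrow> 'y::finite \<Rightarrow> real" and xs :: "nat \<Rightarrow> 'x"
  assumes W: "stochastic W" and P: "is_dist P" "\<forall>x. P x > 0"
    and le: "(\<Sum>i<n. info_dens P W (xs i) (ys i)) \<le> \<gamma>"
  shows "(\<Prod>i<n. W (xs i) (ys i)) \<le> exp \<gamma> * (\<Prod>i<n. out_dist P W (ys i))"
proof (cases "\<exists>i<n. W (xs i) (ys i) = 0")
  case True
  then have "(\<Prod>i<n. W (xs i) (ys i)) = 0" by (auto simp: prod_zero_iff)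
  moreover have "(\<Prod>i<n. out_dist P W (ys i)) \<ge> 0"
    using W P by (auto intro!: prod_nonneg out_dist_nonneg)
  ultimately show ?thesis by (metis mult_nonneg_nonneg exp_ge_zero)
next
  case False
  then have W_pos: "W (xs i) (ys i) > 0" if "i < n" for i
    using W that by (metis less_eq_real_def stochastic_def)
  have Q_pos: "(\<Prod>i<n. out_dist P W (ys i)) > 0"
    using W_pos out_dist_pos[OF W P(2)] by (auto intro: prod_pos)
  have "exp (\<Sum>i<n. info_dens P W (xs i) (ys i))
      = (\<Prod>i<n. W (xs i) (ys i)) / (\<Prod>i<n. out_dist P W (ys i))"
    unfolding exp_sum[OF finite_lessThan] info_dens_def prod_dividef[symmetric]
    using W_pos out_dist_pos[OF W P(2)] by (intro prod.cong) (auto intro!: divide_pos_pos)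
  moreover have "exp (\<Sum>i<n. info_dens P W (xs i) (ys i)) \<le> exp \<gamma>"
    using le by simp
  ultimately show ?thesis
    using Q_pos by (simp add: divide_le_eq mult.commute)
qed

lemma joint_nonneg:
  assumes "stochastic W1" "stochastic W2"
  shows "joint n M W1 W2 f j y1 y2 \<ge> 0"
  using assms unfolding joint_def stochastic_def
  by (auto intro!: prod_nonneg mult_nonneg_nonneg divide_nonneg_nonneg)

lemma code_prob_union_bound:
  assumes "stochastic W1" "stochastic W2"
    and "\<And>j y1 y2. E j y1 y2 \<Longrightarrow> A j y1 y2 \<or> B j y1 y2"
  shows "code_prob n M W1 W2 f E \<le> code_prob n M W1 W2 f A + code_prob n M W1 W2 f B"
  unfolding code_prob_def sum.distrib[symmetric]
  using assms joint_nonneg[OF assms(1,2)] by (intro sum_mono) fastforce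

lemma code_prob_swap:
  "code_prob n M W2 W1 (\<lambda>i j a b. f i j b a) (\<lambda>j y2 y1. E j y1 y2) = code_prob n M W1 W2 f E"
proof -
  have joint_swap:
    "joint n M W2 W1 (\<lambda>i j a b. f i j b a) j y2 y1 = joint n M W1 W2 f j y1 y2" for j y1 y2
    unfolding joint_def by (simp add: mult.commute)
  show ?thesis
    unfolding code_prob_def by (rule sum.cong[OF refl], subst sum.swap) (simp only: joint_swap)
qed

text \<open>The decoder \<open>g\<close> need not map into the message set: it suffices that each output is
  decoded to at most one message.\<close>

lemma code_prob_decoded1_info_dens_le:
  fixes W1 W2 :: "'x::finite \<Rightarrow> 'y::finite \<Rightarrow> real"
  assumes W1: "stochastic W1" and W2: "stochastic W2" and P: "is_dist P" "\<forall>x. P x > 0"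
  shows "code_prob n M W1 W2 f
           (\<lambda>j y1 y2. (\<Sum>i<n. info_dens P W1 (f i j (take i y1) (take i y2)) (y1 ! i)) \<le> \<gamma>
                      \<and> g y1 = j)
         \<le> exp \<gamma> / M"
proof -
  define LN where "LN = {ys :: 'y list. length ys = n}"
  define Q where "Q y1 = (\<Prod>i<n. out_dist P W1 (y1 ! i))" for y1
  define B2 where "B2 j y1 y2 = (\<Prod>i<n. W2 (f i j (take i y1) (take i y2)) (y2 ! i))" for j y1 y2
  define c where "c = exp \<gamma> / M"
  have c_nonneg: "c \<ge> 0" by (simp add: c_def)
  have Q_nonneg: "Q y1 \<ge> 0" for y1
    unfolding Q_def using W1 P by (auto intro!: prod_nonneg out_dist_nonneg)
  have sum_Q: "(\<Sum>y1\<in>LN. Q y1) = 1"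
    unfolding LN_def Q_def
    using sum_causal_prod_eq_1[where p = "\<lambda>i r. out_dist P W1"] sum_out_dist[OF W1 P(1)] by simp
  have sum_B2: "(\<Sum>y2\<in>LN. B2 j y1 y2) = 1" for j y1
    unfolding LN_def B2_def
    using sum_causal_prod_eq_1[where p = "\<lambda>i r. W2 (f i j (take i y1) r)"] W2
    by (simp add: stochastic_def)
  have pointwise:
    "(if (\<Sum>i<n. info_dens P W1 (f i j (take i y1) (take i y2)) (y1 ! i)) \<le> \<gamma> \<and> g y1 = j
      then joint n M W1 W2 f j y1 y2 else 0)
     \<le> (if g y1 = j then c * Q y1 * B2 j y1 y2 else 0)" for j y1 y2
  proof -
    have "joint n M W1 W2 f j y1 y2
        = (\<Prod>i<n. W1 (f i j (take i y1) (take i y2)) (y1 ! i)) * B2 j y1 y2 / M"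
      unfolding joint_def B2_def by (simp add: prod.distrib)
    moreover have "B2 j y1 y2 \<ge> 0"
      unfolding B2_def using W2 by (auto simp: stochastic_def intro: prod_nonneg)
    ultimately show ?thesis
      using prod_channel_le_exp_info_dens[OF W1 P, where ys = "(!) y1" and \<gamma> = \<gamma>]
        Q_nonneg c_nonneg
      by (auto simp: Q_def c_def divide_right_mono mult_right_mono)
  qed
  have "code_prob n M W1 W2 f
          (\<lambda>j y1 y2. (\<Sum>i<n. info_dens P W1 (f i j (take i y1) (take i y2)) (y1 ! i)) \<le> \<gamma>
                     \<and> g y1 = j)
      \<le> (\<Sum>j\<in>{1..M}. \<Sum>y1\<in>LN. \<Sum>y2\<in>LN. if g y1 = j then c * Q y1 * B2 j y1 y2 else 0)"
    unfolding code_prob_def LN_def by (intro sum_mono pointwise)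
  also have "\<dots> = (\<Sum>j\<in>{1..M}. \<Sum>y1\<in>LN. if g y1 = j then c * Q y1 * (\<Sum>y2\<in>LN. B2 j y1 y2) else 0)"
    by (intro sum.cong refl) (auto simp: sum_distrib_left)
  also have "\<dots> = (\<Sum>j\<in>{1..M}. \<Sum>y1\<in>LN. if g y1 = j then c * Q y1 else 0)"
    by (intro sum.cong refl) (simp add: sum_B2)
  also have "\<dots> = (\<Sum>y1\<in>LN. \<Sum>j\<in>{1..M}. if g y1 = j then c * Q y1 else 0)"
    by (rule sum.swap)
  also have "\<dots> \<le> (\<Sum>y1\<in>LN. c * Q y1)"
    using c_nonneg Q_nonneg by (intro sum_mono) (simp add: sum.delta)
  also have "\<dots> = c" by (simp add: sum_distrib_left[symmetric] sum_Q)
  finally show ?thesis unfolding c_def .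
qed

lemma code_prob_decoded2_info_dens_le:
  fixes W1 W2 :: "'x::finite \<Rightarrow> 'y::finite \<Rightarrow> real"
  assumes "stochastic W1" "stochastic W2" "is_dist P" "\<forall>x. P x > 0"
  shows "code_prob n M W1 W2 f
           (\<lambda>j y1 y2. (\<Sum>i<n. info_dens P W2 (f i j (take i y1) (take i y2)) (y2 ! i)) \<le> \<gamma>
                      \<and> g y2 = j)
         \<le> exp \<gamma> / M"
  unfolding code_prob_swap[symmetric, where f = f]
  using assms by (intro code_prob_decoded1_info_dens_le)

lemma convex_combination_le_imp_le:
  fixes a b L \<eta> :: real
  assumes "0 \<le> \<eta>" "\<eta> \<le> 1" "\<eta> * a + (1 - \<eta>) * b \<le> L"
  shows "a \<le> L \<or> b \<le> L"
proof -
  have "min a b = \<eta> * min a b + (1 - \<eta>) * min a b" by (simp add: algebra_simps)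
  also have "\<dots> \<le> \<eta> * a + (1 - \<eta>) * b"
    using assms by (intro add_mono mult_left_mono) auto
  also have "\<dots> \<le> L" by fact
  finally show ?thesis by (simp add: min_le_iff_disj)
qed

lemma code_prob_weighted_info_dens_le:
  fixes W1 W2 :: "'x::finite \<Rightarrow> 'y::finite \<Rightarrow> real"
  assumes W1: "stochastic W1" and W2: "stochastic W2" and P: "is_dist P" "\<forall>x. P x > 0"
    and \<eta>: "0 \<le> \<eta>" "\<eta> \<le> 1"
  shows "code_prob n M W1 W2 f
           (\<lambda>j y1 y2. \<eta> * (\<Sum>i<n. info_dens P W1 (f i j (take i y1) (take i y2)) (y1 ! i))
                      + (1 - \<eta>) * (\<Sum>i<n. info_dens P W2 (f i j (take i y1) (take i y2)) (y2 ! i))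
                      \<le> \<gamma>)
         \<le> code_prob n M W1 W2 f (\<lambda>j y1 y2. g1 y1 \<noteq> j)
           + code_prob n M W1 W2 f (\<lambda>j y1 y2. g2 y2 \<noteq> j) + 2 * (exp \<gamma> / M)"
proof -
  define S1 where "S1 j y1 y2 = (\<Sum>i<n. info_dens P W1 (f i j (take i y1) (take i y2)) (y1 ! i))"
    for j y1 y2
  define S2 where "S2 j y1 y2 = (\<Sum>i<n. info_dens P W2 (f i j (take i y1) (take i y2)) (y2 ! i))"
    for j y1 y2
  let ?P = "code_prob n M W1 W2 f"
  have correct1: "?P (\<lambda>j y1 y2. S1 j y1 y2 \<le> \<gamma> \<and> g1 y1 = j) \<le> exp \<gamma> / M"
    unfolding S1_def by (rule code_prob_decoded1_info_dens_le[OF W1 W2 P])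
  have correct2: "?P (\<lambda>j y1 y2. S2 j y1 y2 \<le> \<gamma> \<and> g2 y2 = j) \<le> exp \<gamma> / M"
    unfolding S2_def by (rule code_prob_decoded2_info_dens_le[OF W1 W2 P])
  have "S1 j y1 y2 \<le> \<gamma> \<or> S2 j y1 y2 \<le> \<gamma>"
    if "\<eta> * S1 j y1 y2 + (1 - \<eta>) * S2 j y1 y2 \<le> \<gamma>" for j y1 y2
    using convex_combination_le_imp_le[OF \<eta> that] .
  then have "?P (\<lambda>j y1 y2. \<eta> * S1 j y1 y2 + (1 - \<eta>) * S2 j y1 y2 \<le> \<gamma>)
      \<le> ?P (\<lambda>j y1 y2. g1 y1 \<noteq> j \<or> S1 j y1 y2 \<le> \<gamma> \<and> g1 y1 = j)
        + ?P (\<lambda>j y1 y2. g2 y2 \<noteq> j \<or> S2 j y1 y2 \<le> \<gamma> \<and> g2 y2 = j)"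
    by (intro code_prob_union_bound[OF W1 W2]) auto
  also have "\<dots> \<le> (?P (\<lambda>j y1 y2. g1 y1 \<noteq> j) + ?P (\<lambda>j y1 y2. S1 j y1 y2 \<le> \<gamma> \<and> g1 y1 = j))
      + (?P (\<lambda>j y1 y2. g2 y2 \<noteq> j) + ?P (\<lambda>j y1 y2. S2 j y1 y2 \<le> \<gamma> \<and> g2 y2 = j))"
    by (intro add_mono code_prob_union_bound[OF W1 W2]) auto
  also have "\<dots> \<le> (?P (\<lambda>j y1 y2. g1 y1 \<noteq> j) + exp \<gamma> / M)
      + (?P (\<lambda>j y1 y2. g2 y2 \<noteq> j) + exp \<gamma> / M)"
    using correct1 correct2 by (intro add_mono order_refl)
  finally show ?thesis
    unfolding S1_def S2_def by linarith
qed

theorem theorem1: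
  fixes W1 W2 :: "'x::finite \<Rightarrow> 'y::finite \<Rightarrow> real"
    and Ps :: "'x \<Rightarrow> real" and \<eta> :: real
    and n M :: nat and eps lam :: real
    and f :: "nat \<Rightarrow> nat \<Rightarrow> 'y list \<Rightarrow> 'y list \<Rightarrow> 'x"
    and g1 g2 :: "'y list \<Rightarrow> nat"
  assumes W1: "stochastic W1" and W2: "stochastic W2"
    and Ps_max: "unique_maxmin W1 W2 Ps"
    and Ps_pos: "\<forall>x. Ps x > 0"
    and V1: "disp Ps W1 > 0" and V2: "disp Ps W2 > 0"
    and C1: "capacity W1 > min (mutual_info Ps W1) (mutual_info Ps W2)"
    and C2: "capacity W2 > min (mutual_info Ps W1) (mutual_info Ps W2)"
    and eta: "0 < \<eta>" "\<eta> < 1"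
    and eta_def: "\<forall>v. (\<Sum>x\<in>UNIV. v x) = 0 \<longrightarrow> \<eta> * dI Ps W1 v + (1 - \<eta>) * dI Ps W2 v = 0"
    and n: "n > 0" and M: "M > 0"
    and eps: "0 \<le> eps" "eps \<le> 1"
    and code: "FLF_code n M eps W1 W2 f g1 g2"
    and lam: "lam > 0"
  shows "eps \<ge> 1/2 * code_prob n M W1 W2 f
            (\<lambda>j y1 y2. \<eta> * (\<Sum>i<n. info_dens Ps W1 (f i j (take i y1) (take i y2)) (y1 ! i))
                    + (1 - \<eta>) * (\<Sum>i<n. info_dens Ps W2 (f i j (take i y1) (take i y2)) (y2 ! i))
                    \<le> ln (real M) - lam)
          - exp (- lam)"
proof -
  have Ps: "is_dist Ps" using Ps_max by (simp add: unique_maxmin_def)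
  have "exp (ln (real M) - lam) / M = exp (- lam)"
    using M by (simp add: exp_diff exp_minus field_simps)
  moreover have "code_prob n M W1 W2 f (\<lambda>j y1 y2. g1 y1 \<noteq> j) \<le> eps"
    and "code_prob n M W1 W2 f (\<lambda>j y1 y2. g2 y2 \<noteq> j) \<le> eps"
    using code unfolding FLF_code_def by blast+
  moreover have "code_prob n M W1 W2 f
            (\<lambda>j y1 y2. \<eta> * (\<Sum>i<n. info_dens Ps W1 (f i j (take i y1) (take i y2)) (y1 ! i))
                    + (1 - \<eta>) * (\<Sum>i<n. info_dens Ps W2 (f i j (take i y1) (take i y2)) (y2 ! i))
                    \<le> ln (real M) - lam)
      \<le> code_prob n M W1 W2 f (\<lambda>j y1 y2. g1 y1 \<noteq> j)
        + code_prob n M W1 W2 f (\<lambda>j y1 y2. g2 y2 \<noteq> j) + 2 * (exp (ln (real M) - lam) / M)"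
    using eta by (intro code_prob_weighted_info_dens_le[OF W1 W2 Ps Ps_pos]) auto
  ultimately show ?thesis by linarith
qed

end
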